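(* Let $M$ be a matroid, $\psi\colon E(M)\to\Gamma$ a labeling to an abelian group, $F\subseteq\Gamma$ finite, and $\alpha$ a positive integer. If $M$ is $(\alpha,|F|+1)$-weakly base orderable and $M$ has at least one $F$-avoiding basis, then for every basis $B$ of $M$ there exists an $F$-avoiding basis $B^*$ with $|B\setminus B^*|\le\alpha-1$.
   Context: $\psi(S):=\sum_{x\in S}\psi(x)$; a basis $B$ is $F$-avoiding if $\psi(B)\notin F$. For a positive integer $k$, an ordered pair $(B_1,B_2)$ of bases has the $k$-exchange property if there exist pairwise disjoint nonempty $X_1,\dots,X_k\subseteq B_1\setminus B_2$ and pairwise disjoint nonempty $Y_1,\dots,Y_k\subseteq B_2\setminus B_1$ such that $(B_1\setminus\bigcup_{i\in Z}X_i)\cup\bigcup_{i\in Z}Y_i$ is a basis for every $Z\subseteq[k]$. A matroid is $(\alpha,k)$-weakly base orderable if every ordered pair $(B_1,B_2)$ of bases with $|B_1\setminus B_2|\ge\alpha$ has the $k$-exchange property. *)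

theory Defs
  imports Main "HOL-Library.Disjoint_Sets"
begin

definition matroid :: "'a set \<Rightarrow> ('a set \<Rightarrow> bool) \<Rightarrow> bool" where
  "matroid E indep \<longleftrightarrow>
     finite E \<and>
     (\<forall>X. indep X \<longrightarrow> X \<subseteq> E) \<and>
     indep {} \<and>
     (\<forall>X Y. indep X \<and> Y \<subseteq> X \<longrightarrow> indep Y) \<and>
     (\<forall>X Y. indep X \<and> indep Y \<and> card X < card Y \<longrightarrow> (\<exists>y\<in>Y - X. indep (insert y X)))"

definition basis :: "'a set \<Rightarrow> ('a set \<Rightarrow> bool) \<Rightarrow> 'a set \<Rightarrow> bool" where
  "basis E indep B \<longleftrightarrow> indep B \<and> (\<forall>x\<in>E - B. \<not> indep (insert x B))"

definition F_avoiding :: "'a set \<Rightarrow> ('a set \<Rightarrow> bool) \<Rightarrow> ('a \<Rightarrow> 'g::ab_group_add) \<Rightarrow> 'g set \<Rightarrow> 'a set \<Rightarrow> bool" where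
  "F_avoiding E indep \<psi> F B \<longleftrightarrow> basis E indep B \<and> sum \<psi> B \<notin> F"

definition k_exchange :: "'a set \<Rightarrow> ('a set \<Rightarrow> bool) \<Rightarrow> nat \<Rightarrow> 'a set \<Rightarrow> 'a set \<Rightarrow> bool" where
  "k_exchange E indep k B1 B2 \<longleftrightarrow>
     (\<exists>X Y :: nat \<Rightarrow> 'a set.
        (\<forall>i\<in>{1..k}. X i \<noteq> {} \<and> X i \<subseteq> B1 - B2 \<and> Y i \<noteq> {} \<and> Y i \<subseteq> B2 - B1) \<and>
        disjoint_family_on X {1..k} \<and> disjoint_family_on Y {1..k} \<and>
        (\<forall>Z\<subseteq>{1..k}. basis E indep ((B1 - (\<Union>i\<in>Z. X i)) \<union> (\<Union>i\<in>Z. Y i))))"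

definition weakly_base_orderable :: "'a set \<Rightarrow> ('a set \<Rightarrow> bool) \<Rightarrow> nat \<Rightarrow> nat \<Rightarrow> bool" where
  "weakly_base_orderable E indep \<alpha> k \<longleftrightarrow>
     (\<forall>B1 B2. basis E indep B1 \<and> basis E indep B2 \<and> card (B1 - B2) \<ge> \<alpha>
        \<longrightarrow> k_exchange E indep k B1 B2)"

end

theory Submission
  imports Defs
begin

text \<open>Start from an \<open>F\<close>-avoiding basis \<open>B'\<close> as close to \<open>B\<close> as possible. If
  \<open>|B' - B| \<ge> \<alpha>\<close>, the \<open>(|F| + 1)\<close>-exchange property yields exchange pairs
  \<open>(X\<^sub>i, Y\<^sub>i)\<close>, \<open>i = 1, \<dots>, |F| + 1\<close>, any subfamily of which can be swapped
  simultaneously. Swapping the pairs \<open>a+1, \<dots>, b\<close> changes \<open>\<psi>\<close> by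
  \<open>\<delta>\<^sub>a\<^sub>+\<^sub>1 + \<dots> + \<delta>\<^sub>b\<close>, where \<open>\<delta>\<^sub>i = \<psi>(Y\<^sub>i) - \<psi>(X\<^sub>i)\<close>. By pigeonhole on the \<open>|F| + 1\<close>
  prefix sums, some such nonempty swap moves \<open>\<psi>(B')\<close> to a value outside \<open>F\<close>; the
  resulting basis is still \<open>F\<close>-avoiding and strictly closer to \<open>B\<close>, a contradiction.\<close>

lemma basis_subset_ground: "matroid E indep \<Longrightarrow> basis E indep B \<Longrightarrow> B \<subseteq> E"
  unfolding matroid_def basis_def by blast

lemma finite_basis: "matroid E indep \<Longrightarrow> basis E indep B \<Longrightarrow> finite B"
  by (meson basis_subset_ground finite_subset matroid_def)

lemma basis_card_le:
  assumes m: "matroid E indep" and B1: "basis E indep B1" and B2: "basis E indep B2"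
  shows "card B2 \<le> card B1"
proof (rule ccontr)
  assume "\<not> card B2 \<le> card B1"
  moreover have "indep B1" "indep B2" using B1 B2 unfolding basis_def by auto
  moreover have "\<And>X Y. indep X \<Longrightarrow> indep Y \<Longrightarrow> card X < card Y
      \<Longrightarrow> \<exists>y\<in>Y - X. indep (insert y X)"
    using m unfolding matroid_def by blast
  ultimately obtain y where y: "y \<in> B2 - B1" "indep (insert y B1)"
    by (meson not_le)
  moreover have "y \<in> E" using y basis_subset_ground[OF m B2] by blast
  ultimately show False using B1 unfolding basis_def by blast
qed

lemma card_basis_diff_commute:
  assumes m: "matroid E indep" and B1: "basis E indep B1" and B2: "basis E indep B2"
  shows "card (B1 - B2) = card (B2 - B1)"
proof -
  have "card B1 = card B2" using basis_card_le[OF m B1 B2] basis_card_le[OF m B2 B1] by simp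
  with finite_basis[OF m B1] finite_basis[OF m B2] show ?thesis
    by (simp add: card_Diff_subset_Int Int_commute)
qed

text \<open>Pigeonhole on the prefix sums \<open>s + \<delta>\<^sub>1 + \<dots> + \<delta>\<^sub>j\<close>: if all lay in \<open>F\<close>, two would
  coincide, and the block of increments between them sums to \<open>0\<close>, leaving \<open>s \<notin> F\<close>.\<close>
lemma nonempty_index_set_sum_avoids:
  fixes \<delta> :: "nat \<Rightarrow> 'g::ab_group_add"
  assumes "finite F" and "s \<notin> F" and "card F < k"
  shows "\<exists>Z\<subseteq>{1..k}. Z \<noteq> {} \<and> s + sum \<delta> Z \<notin> F"
proof (rule ccontr)
  assume all_in: "\<not> ?thesis"
  define prefix where "prefix j = s + sum \<delta> {1..j}" for j
  have "prefix j \<in> F" if "j \<in> {1..k}" for j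
  proof -
    have "{1..j} \<subseteq> {1..k}" "{1..j} \<noteq> {}" using that by auto
    then show ?thesis using all_in unfolding prefix_def by blast
  qed
  then have "prefix ` {1..k} \<subseteq> F" by blast
  have not_inj: "\<not> inj_on prefix {1..k}"
  proof
    assume "inj_on prefix {1..k}"
    then have "card {1..k} \<le> card F"
      using card_inj_on_le \<open>prefix ` {1..k} \<subseteq> F\<close> assms(1) by blast
    with assms(3) show False by simp
  qed
  obtain a b where ab: "a \<in> {1..k}" "b \<in> {1..k}" "a < b" "prefix a = prefix b"
  proof -
    obtain a0 b0 where "a0 \<in> {1..k}" "b0 \<in> {1..k}" "a0 \<noteq> b0" "prefix a0 = prefix b0"
      using not_inj unfolding inj_on_def by blast
    then show thesis using that[of a0 b0] that[of b0 a0] by (cases "a0 < b0") auto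
  qed
  have "{1..b} = {1..a} \<union> {Suc a..b}" "{1..a} \<inter> {Suc a..b} = {}" using ab by auto
  then have "sum \<delta> {1..b} = sum \<delta> {1..a} + sum \<delta> {Suc a..b}"
    by (simp add: sum.union_disjoint)
  with ab(4) have "sum \<delta> {Suc a..b} = 0" by (simp add: prefix_def)
  moreover have "s + sum \<delta> {Suc a..b} \<in> F"
  proof -
    have "{Suc a..b} \<subseteq> {1..k}" "{Suc a..b} \<noteq> {}" using ab by auto
    then show ?thesis using all_in by blast
  qed
  ultimately show False using assms(2) by simp
qed

lemma sum_exchange_disjoint_family:
  fixes \<psi> :: "'a \<Rightarrow> 'g::ab_group_add"
  assumes "finite B" and "finite Z"
    and "\<And>i. i \<in> Z \<Longrightarrow> X i \<subseteq> B" and "\<And>i. i \<in> Z \<Longrightarrow> finite (Y i)"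
    and "\<And>i. i \<in> Z \<Longrightarrow> Y i \<inter> B = {}"
    and "disjoint_family_on X Z" and "disjoint_family_on Y Z"
  shows "sum \<psi> ((B - (\<Union>i\<in>Z. X i)) \<union> (\<Union>i\<in>Z. Y i))
           = sum \<psi> B + (\<Sum>i\<in>Z. sum \<psi> (Y i) - sum \<psi> (X i))"
proof -
  have finite_X: "\<And>i. i \<in> Z \<Longrightarrow> finite (X i)" using assms(1,3) finite_subset by blast
  have sum_X: "sum \<psi> (\<Union>i\<in>Z. X i) = (\<Sum>i\<in>Z. sum \<psi> (X i))"
    using assms(2,6) finite_X by (intro sum.UNION_disjoint) (auto simp: disjoint_family_on_def)
  have sum_Y: "sum \<psi> (\<Union>i\<in>Z. Y i) = (\<Sum>i\<in>Z. sum \<psi> (Y i))"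
    using assms(2,4,7) by (intro sum.UNION_disjoint) (auto simp: disjoint_family_on_def)
  have "sum \<psi> ((B - (\<Union>i\<in>Z. X i)) \<union> (\<Union>i\<in>Z. Y i))
          = sum \<psi> (B - (\<Union>i\<in>Z. X i)) + sum \<psi> (\<Union>i\<in>Z. Y i)"
    using assms(1,2,4,5) by (intro sum.union_disjoint) auto
  also have "sum \<psi> (B - (\<Union>i\<in>Z. X i)) = sum \<psi> B - sum \<psi> (\<Union>i\<in>Z. X i)"
    using assms(1,3) by (subst sum_diff) auto
  finally show ?thesis by (simp add: sum_X sum_Y sum_subtractf)
qed

lemma card_diff_exchange_less:
  assumes "finite B" and "U \<inter> B = {}" and "V \<subseteq> B - B'" and "V \<noteq> {}"
  shows "card (B - ((B' - U) \<union> V)) < card (B - B')"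
proof (rule psubset_card_mono)
  show "finite (B - B')" using assms(1) by simp
  show "B - ((B' - U) \<union> V) \<subset> B - B'" using assms(2-4) by blast
qed

lemma F_avoiding_closer_by_exchange:
  fixes \<psi> :: "'a \<Rightarrow> 'g::ab_group_add"
  assumes m: "matroid E indep" and "finite F"
    and exchange: "k_exchange E indep (card F + 1) B' B"
    and B: "basis E indep B" and B': "F_avoiding E indep \<psi> F B'"
  shows "\<exists>B''. F_avoiding E indep \<psi> F B'' \<and> card (B - B'') < card (B - B')"
proof -
  let ?I = "{1..card F + 1}"
  obtain X Y where XY: "\<forall>i\<in>?I. X i \<noteq> {} \<and> X i \<subseteq> B' - B \<and> Y i \<noteq> {} \<and> Y i \<subseteq> B - B'"
    and disjoint: "disjoint_family_on X ?I" "disjoint_family_on Y ?I"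
    and swap_basis: "\<forall>Z\<subseteq>?I. basis E indep ((B' - (\<Union>i\<in>Z. X i)) \<union> (\<Union>i\<in>Z. Y i))"
    using exchange unfolding k_exchange_def by blast
  have "basis E indep B'" and "sum \<psi> B' \<notin> F" using B' unfolding F_avoiding_def by auto
  have finite: "finite B" "finite B'" using finite_basis[OF m] B \<open>basis E indep B'\<close> by auto
  obtain Z where Z: "Z \<subseteq> ?I" "Z \<noteq> {}"
    and avoids: "sum \<psi> B' + (\<Sum>i\<in>Z. sum \<psi> (Y i) - sum \<psi> (X i)) \<notin> F"
    using nonempty_index_set_sum_avoids[OF \<open>finite F\<close> \<open>sum \<psi> B' \<notin> F\<close>, of "card F + 1"]
    by auto
  define B'' where "B'' = (B' - (\<Union>i\<in>Z. X i)) \<union> (\<Union>i\<in>Z. Y i)"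
  have "finite Z" using Z(1) finite_subset by blast
  have XY_Z: "X i \<subseteq> B'" "Y i \<inter> B' = {}" "Y i \<subseteq> B - B'" "Y i \<noteq> {}" if "i \<in> Z" for i
  proof -
    have "i \<in> ?I" using that Z(1) by blast
    with XY show "X i \<subseteq> B'" "Y i \<inter> B' = {}" "Y i \<subseteq> B - B'" "Y i \<noteq> {}" by blast+
  qed
  have "finite (Y i)" if "i \<in> Z" for i
    using XY_Z(3)[OF that] finite(1) by (meson Diff_subset finite_subset)
  then have "sum \<psi> B'' = sum \<psi> B' + (\<Sum>i\<in>Z. sum \<psi> (Y i) - sum \<psi> (X i))"
    unfolding B''_def using finite(2) \<open>finite Z\<close> XY_Z(1,2)
      disjoint_family_on_mono[OF Z(1) disjoint(1)] disjoint_family_on_mono[OF Z(1) disjoint(2)]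
    by (intro sum_exchange_disjoint_family)
  with avoids swap_basis Z(1) have avoiding: "F_avoiding E indep \<psi> F B''"
    unfolding F_avoiding_def B''_def by simp
  have "(\<Union>i\<in>Z. X i) \<inter> B = {}" using XY Z(1) by fast
  moreover have "(\<Union>i\<in>Z. Y i) \<subseteq> B - B'" "(\<Union>i\<in>Z. Y i) \<noteq> {}"
    using XY_Z(3,4) Z(2) by blast+
  ultimately have "card (B - B'') < card (B - B')"
    unfolding B''_def by (rule card_diff_exchange_less[OF finite(1)])
  with avoiding show ?thesis by blast
qed

theorem theorem5p10:
  fixes E :: "'a set" and indep :: "'a set \<Rightarrow> bool"
    and \<psi> :: "'a \<Rightarrow> 'g::ab_group_add" and F :: "'g set" and \<alpha> :: nat
  assumes "matroid E indep"
    and "finite F"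
    and "\<alpha> > 0"
    and "weakly_base_orderable E indep \<alpha> (card F + 1)"
    and "\<exists>B. F_avoiding E indep \<psi> F B"
  shows "\<forall>B. basis E indep B \<longrightarrow>
           (\<exists>B'. F_avoiding E indep \<psi> F B' \<and> card (B - B') \<le> \<alpha> - 1)"
proof (intro allI impI)
  fix B assume B: "basis E indep B"
  obtain B' where B': "F_avoiding E indep \<psi> F B'"
    and closest: "\<And>B''. F_avoiding E indep \<psi> F B'' \<Longrightarrow> card (B - B') \<le> card (B - B'')"
    using ex_has_least_nat[of "F_avoiding E indep \<psi> F" _ "\<lambda>B'. card (B - B')"] assms(5)
    by blast
  have "card (B - B') < \<alpha>"
  proof (rule ccontr)
    assume "\<not> card (B - B') < \<alpha>"
    with B B' assms(1) have "card (B' - B) \<ge> \<alpha>"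
      using card_basis_diff_commute unfolding F_avoiding_def by fastforce
    with assms(4) B B' have "k_exchange E indep (card F + 1) B' B"
      unfolding weakly_base_orderable_def F_avoiding_def by blast
    from F_avoiding_closer_by_exchange[OF assms(1,2) this B B'] closest show False
      by (meson not_le)
  qed
  with B' show "\<exists>B'. F_avoiding E indep \<psi> F B' \<and> card (B - B') \<le> \<alpha> - 1" by auto
qed

end
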